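(* Let $\mathfrak M$ (modelled on $X$) be a Banach manifold with chart family $\mathscr A$ and $\mathfrak M_0$ (modelled on $X_0$) a $C^1$-embedded Banach submanifold of $\mathfrak M$ with respect to $\mathscr A$, such that $(\mathfrak M,\mathfrak M_0,\mathscr A)$ is outward spreadable. Let $\eta\in\mathfrak M_0$, $(\mathcal U,\varphi)$ an $\mathfrak M_0$-regular chart at $\eta$, and $f:(-\varepsilon,\varepsilon)\to\mathfrak M$ with $f(0)=\eta$ such that $\varphi\circ f:(-\varepsilon,\varepsilon)\to X$ is differentiable at $t=0$. Then for every $\mathfrak M_0$-regular chart $(\mathcal V,\psi)$ at $\eta$ such that $\psi\circ f:(-\varepsilon,\varepsilon)\to X$ is differentiable at $t=0$, $$(\psi\circ f)'(0)=(\psi\circ\varphi^{-1})'(\varphi(\eta))\,(\varphi\circ f)'(0).$$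
   Context: Densely embedded spaces and the class $\mathfrak C^k$. For Banach spaces $X$ and $X_0$, $X_0$ is a densely embedded Banach subspace of $X$ if $X_0$ is a dense linear subspace of $X$ and there is $C>0$ with $\|x\|_X\le C\|x\|_{X_0}$ for $x\in X_0$. For such $X_0\subseteq X$, a Banach space $Y$, an open set $U_0\subseteq X_0$ and an integer $k\ge1$, $\mathfrak C^k(U_0;X,Y)$ denotes the set of maps $F:U_0\to Y$ such that (i) for each $x_0\in U_0$ there are bounded symmetric $j$-linear maps $F^{(j)}(x_0):X^j\to Y$, $1\le j\le k$, with $\|F(x)-F(x_0)-\sum_{j=1}^k\frac1{j!}F^{(j)}(x_0)(x-x_0,\dots,x-x_0)\|_Y/\|x-x_0\|_{X_0}^k\to0$ as $\|x-x_0\|_{X_0}\to0$, and (ii) $x\mapsto F^{(j)}(x)$ is continuous from $U_0$ (with the $X_0$-topology) into the space $L^j(X,Y)$ of bounded $j$-linear maps. We write $F'=F^{(1)}$. Embedded submanifolds. Let $\mathfrak M,\mathfrak M_0$ be topological Banach manifolds modelled on $X$, $X_0$, let $\mathscr A$ be a family of local charts of $\mathfrak M$, and $k\ge1$. $\mathfrak M_0$ is a $C^k$-embedded Banach submanifold of $\mathfrak M$ with respect to $\mathscr A$ if: (D1) $X_0$ is a densely embedded Banach subspace of $X$; (D2) $\mathfrak M_0\subseteq\mathfrak M$ and $\mathcal U\cap\mathfrak M_0$ is open in $\mathfrak M_0$ for every open $\mathcal U\subseteq\mathfrak M$; (D3) the domains of the charts of $\mathscr A$ cover $\mathfrak M$;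 (D4) for $\eta\in\mathfrak M_0$ and $(\mathcal U,\varphi)\in\mathscr A$ with $\eta\in\mathcal U$, $(\mathcal U_0,\varphi|_{\mathcal U_0})$ with $\mathcal U_0:=\mathcal U\cap\mathfrak M_0$ is a local chart of $\mathfrak M_0$; (D5) for $\eta\in\mathfrak M_0$ and $(\mathcal U,\varphi),(\mathcal V,\psi)\in\mathscr A$ with $\eta\in\mathcal U\cap\mathcal V$, $\psi\circ\varphi^{-1}\in\mathfrak C^k(\varphi(\mathcal U_0\cap\mathcal V_0);X,X)$ and $\varphi\circ\psi^{-1}\in\mathfrak C^k(\psi(\mathcal U_0\cap\mathcal V_0);X,X)$. A chart of $\mathscr A$ whose domain contains $\eta$ is an $\mathfrak M_0$-regular local chart at $\eta$. $(\mathfrak M,\mathfrak M_0,\mathscr A)$ is outward spreadable if there is a Banach manifold $\widetilde{\mathfrak M}\supseteq\mathfrak M$ with a chart family $\widetilde{\mathscr A}$ whose restrictions to $\mathfrak M$ form $\mathscr A$, such that $\mathfrak M$ is a $C^1$-embedded Banach submanifold of $\widetilde{\mathfrak M}$ with respect to $\widetilde{\mathscr A}$. For charts at $\eta\in\mathfrak M_0$, $(\varphi\circ\psi^{-1})'(\psi(\eta))\in L(X)$ is the first derivative in the $\mathfrak C^1$ sense. *)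

theory Defs
  imports "HOL-Analysis.Analysis"
begin

text \<open>A Banach space X0 densely embedded in X is represented by the (inclusion)
map j :: X0 \<Rightarrow> X: bounded linear (\<open>\<parallel>j x\<parallel> \<le> C \<parallel>x\<parallel>\<close>), injective, with dense range.\<close>
definition densely_embedded :: "('a::banach \<Rightarrow> 'b::banach) \<Rightarrow> bool" where
  "densely_embedded j \<longleftrightarrow> bounded_linear j \<and> inj j \<and> closure (range j) = UNIV"

text \<open>First-order expansion in the frak-C sense at x0 of F defined on U0 \<subseteq> X0,
with derivative L \<in> L(X,Y); the remainder is measured against the X0-norm.\<close>
definition has_frakC_deriv ::
  "('a::banach \<Rightarrow> 'b::banach) \<Rightarrow> 'a set \<Rightarrow> ('a \<Rightarrow> 'y::banach) \<Rightarrow> ('b \<Rightarrow>\<^sub>L 'y) \<Rightarrow> 'a \<Rightarrow> bool" where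
  "has_frakC_deriv j U0 F L x0 \<longleftrightarrow>
     ((\<lambda>x. (F x - F x0 - blinfun_apply L (j (x - x0))) /\<^sub>R norm (x - x0)) \<longlongrightarrow> 0) (at x0 within U0)"

definition frakC1 :: "('a::banach \<Rightarrow> 'b::banach) \<Rightarrow> 'a set \<Rightarrow> ('a \<Rightarrow> 'y::banach) \<Rightarrow> bool" where
  "frakC1 j U0 F \<longleftrightarrow> open U0 \<and>
     (\<exists>Fd :: 'a \<Rightarrow> ('b \<Rightarrow>\<^sub>L 'y). (\<forall>x0\<in>U0. has_frakC_deriv j U0 F (Fd x0) x0) \<and> continuous_on U0 Fd)"

definition frakC1_deriv :: "('a::banach \<Rightarrow> 'b::banach) \<Rightarrow> 'a set \<Rightarrow> ('a \<Rightarrow> 'y::banach) \<Rightarrow> 'a \<Rightarrow> ('b \<Rightarrow>\<^sub>L 'y)" where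
  "frakC1_deriv j U0 F x0 = (THE L. has_frakC_deriv j U0 F L x0)"

definition is_chart :: "'m topology \<Rightarrow> ('m \<Rightarrow> 'x::topological_space) \<Rightarrow> 'm set \<Rightarrow> bool" where
  "is_chart M \<phi> U \<longleftrightarrow> openin M U \<and> open (\<phi> ` U) \<and>
     homeomorphic_map (subtopology M U) (top_of_set (\<phi> ` U)) \<phi>"

definition banach_manifold :: "'m topology \<Rightarrow> 'x::banach itself \<Rightarrow> bool" where
  "banach_manifold M X \<longleftrightarrow> (\<forall>p\<in>topspace M. \<exists>U (\<phi>::'m \<Rightarrow> 'x). p \<in> U \<and> is_chart M \<phi> U)"

text \<open>Domain phi(U0 \<inter> V0) of the transition map psi \<circ> phi^-1, as a subset of X0.\<close>
definition trans_dom :: "('a \<Rightarrow> 'b) \<Rightarrow> 'm topology \<Rightarrow> 'm set \<Rightarrow> ('m \<Rightarrow> 'b) \<Rightarrow> 'm set \<Rightarrow> 'a set" where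
  "trans_dom j M0 U \<phi> V = j -` (\<phi> ` (U \<inter> V \<inter> topspace M0))"

definition transition :: "('a \<Rightarrow> 'b) \<Rightarrow> 'm set \<Rightarrow> ('m \<Rightarrow> 'b) \<Rightarrow> ('m \<Rightarrow> 'c) \<Rightarrow> 'a \<Rightarrow> 'c" where
  "transition j U \<phi> \<psi> = (\<lambda>x. \<psi> (inv_into U \<phi> (j x)))"

text \<open>M0 (modelled on 'a) is a C^1-embedded Banach submanifold of M (modelled on 'b)
  with respect to the chart family A; conditions (D1)-(D5).\<close>
definition C1_embedded ::
  "('a::banach \<Rightarrow> 'b::banach) \<Rightarrow> 'm topology \<Rightarrow> 'm topology \<Rightarrow> ('m set \<times> ('m \<Rightarrow> 'b)) set \<Rightarrow> bool" where
  "C1_embedded j M M0 A \<longleftrightarrow>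
     banach_manifold M TYPE('b) \<and> banach_manifold M0 TYPE('a) \<and>
     (\<forall>(U,\<phi>)\<in>A. is_chart M \<phi> U) \<and>
     densely_embedded j \<and>
     topspace M0 \<subseteq> topspace M \<and> (\<forall>U. openin M U \<longrightarrow> openin M0 (U \<inter> topspace M0)) \<and>
     topspace M \<subseteq> \<Union>(fst ` A) \<and>
     (\<forall>\<eta>\<in>topspace M0. \<forall>(U,\<phi>)\<in>A. \<eta> \<in> U \<longrightarrow>
        (\<exists>\<phi>0::'m \<Rightarrow> 'a. (\<forall>p\<in>U \<inter> topspace M0. j (\<phi>0 p) = \<phi> p) \<and> is_chart M0 \<phi>0 (U \<inter> topspace M0))) \<and>
     (\<forall>\<eta>\<in>topspace M0. \<forall>(U,\<phi>)\<in>A. \<forall>(V,\<psi>)\<in>A. \<eta> \<in> U \<inter> V \<longrightarrow>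
        frakC1 j (trans_dom j M0 U \<phi> V) (transition j U \<phi> \<psi>) \<and>
        frakC1 j (trans_dom j M0 V \<psi> U) (transition j V \<psi> \<phi>))"

text \<open>(Mt, At, j1) witnesses that (M, M0, A) is outward spreadable: M (modelled on 'b,
  embedded in 'c via j1) is a C^1-embedded submanifold of Mt w.r.t. At, and the
  restrictions of the charts of At to M form A.\<close>
definition outward_spread ::
  "('b::banach \<Rightarrow> 'c::banach) \<Rightarrow> 'm topology \<Rightarrow> ('m set \<times> ('m \<Rightarrow> 'b)) set
     \<Rightarrow> 'm topology \<Rightarrow> ('m set \<times> ('m \<Rightarrow> 'c)) set \<Rightarrow> bool" where
  "outward_spread j1 M A Mt At \<longleftrightarrow>
     C1_embedded j1 Mt M At \<and>
     (\<forall>(U,\<phi>)\<in>A. \<exists>(Ut,\<phi>t)\<in>At. U = Ut \<inter> topspace M \<and> (\<forall>p\<in>U. j1 (\<phi> p) = \<phi>t p)) \<and>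
     (\<forall>(Ut,\<phi>t)\<in>At. Ut \<inter> topspace M \<noteq> {} \<longrightarrow>
        (\<exists>(U,\<phi>)\<in>A. U = Ut \<inter> topspace M \<and> (\<forall>p\<in>U. j1 (\<phi> p) = \<phi>t p)))"

end

theory Submission
  imports Defs
begin

text \<open>
  The transition maps of the outer manifold are Frechet differentiable on open subsets of
  X, and the outer transition agrees with the inner one on the embedded part. Differentiating
  this identity at the point of \<open>\<eta>\<close> and using density of X0 in X shows that the
  frakC1-derivative of \<open>\<psi> \<circ> \<phi>\<^sup>-\<^sup>1\<close> is the restriction of the
  Frechet derivative of the outer transition. The formula then follows from the ordinary
  chain rule applied to the outer transition and the curve \<open>\<phi> \<circ> f\<close>, since the
  embedding of X is injective.
\<close>

lemma continuous_eq_on_dense_range: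
  fixes g h :: "'b::topological_space \<Rightarrow> 'c::t2_space"
  assumes "closure (range j) = UNIV" "continuous_on UNIV g" "continuous_on UNIV h"
    and "\<And>x. g (j x) = h (j x)"
  shows "g = h"
proof -
  have "closed {y. g y = h y}"
    using assms(2,3) by (simp add: closed_Collect_eq)
  moreover have "range j \<subseteq> {y. g y = h y}"
    using assms(4) by auto
  ultimately have "closure (range j) \<subseteq> {y. g y = h y}"
    by (rule closure_minimal[rotated])
  then show ?thesis
    using assms(1) by auto
qed

lemma bounded_linear_eq_on_dense_range:
  assumes "densely_embedded j" "bounded_linear g" "bounded_linear h"
    and "\<And>x. g (j x) = h (j x)"
  shows "g = h"
  using assms by (intro continuous_eq_on_dense_range[where j = j])
    (auto simp: densely_embedded_def intro: linear_continuous_on)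

lemma has_frakC_deriv_imp_has_derivative:
  assumes "has_frakC_deriv j U0 F L x0" "open U0" "x0 \<in> U0" "bounded_linear j"
  shows "(F has_derivative (\<lambda>h. L (j h))) (at x0)"
proof -
  have "bounded_linear (\<lambda>h. L (j h))"
    using assms(4) bounded_linear_compose blinfun.bounded_linear_right by blast
  then have "(F has_derivative (\<lambda>h. L (j h))) (at x0 within U0)"
    using assms(1) unfolding has_frakC_deriv_def has_derivative_at_within by simp
  then show ?thesis
    using at_within_open[OF assms(3,2)] by simp
qed

lemma has_frakC_deriv_unique:
  assumes "has_frakC_deriv j U0 F L x0" "has_frakC_deriv j U0 F L' x0"
    and "open U0" "x0 \<in> U0" "densely_embedded j"
  shows "L = L'"
proof -
  have bl: "bounded_linear j"
    using assms(5) by (simp add: densely_embedded_def)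
  have "(\<lambda>h. L (j h)) = (\<lambda>h. L' (j h))"
    using has_derivative_unique has_frakC_deriv_imp_has_derivative[OF assms(1,3,4) bl]
      has_frakC_deriv_imp_has_derivative[OF assms(2,3,4) bl] by blast
  then have "blinfun_apply L = blinfun_apply L'"
    using assms(5) by (intro bounded_linear_eq_on_dense_range[where j = j])
      (auto simp: fun_eq_iff intro: blinfun.bounded_linear_right)
  then show ?thesis
    by (simp add: blinfun_eqI)
qed

lemma frakC1_has_derivative:
  assumes "frakC1 j U0 F" "x0 \<in> U0" "densely_embedded j"
  shows "(F has_derivative (\<lambda>h. frakC1_deriv j U0 F x0 (j h))) (at x0)"
proof -
  from assms(1) obtain Fd where U0: "open U0" and Fd: "has_frakC_deriv j U0 F (Fd x0) x0"
    using assms(2) unfolding frakC1_def by blast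
  have "has_frakC_deriv j U0 F (frakC1_deriv j U0 F x0) x0"
    unfolding frakC1_deriv_def
    by (rule theI[of _ "Fd x0"], rule Fd, rule has_frakC_deriv_unique[OF _ Fd U0 assms(2,3)])
  then show ?thesis
    using has_frakC_deriv_imp_has_derivative U0 assms(2,3) by (auto simp: densely_embedded_def)
qed

lemma is_chart_inj_on: "is_chart M \<phi> U \<Longrightarrow> inj_on \<phi> U"
  unfolding is_chart_def homeomorphic_map_def
  by (metis openin_subset topspace_subtopology_subset)

lemma transition_apply:
  assumes "inj_on \<phi> U" "p \<in> U" "j x = \<phi> p"
  shows "transition j U \<phi> \<psi> x = \<psi> p"
  using assms by (simp add: transition_def)

lemma trans_domE:
  assumes "x \<in> trans_dom j M0 U \<phi> V"
  obtains p where "p \<in> U \<inter> V \<inter> topspace M0" "j x = \<phi> p"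
  using assms unfolding trans_dom_def by blast

lemma C1_embedded_is_chart:
  "C1_embedded j M M0 A \<Longrightarrow> (U, \<phi>) \<in> A \<Longrightarrow> is_chart M \<phi> U"
  by (auto simp: C1_embedded_def)

lemma C1_embedded_densely_embedded:
  "C1_embedded j M M0 A \<Longrightarrow> densely_embedded j"
  by (simp add: C1_embedded_def)

lemma C1_embedded_transition_frakC1:
  assumes "C1_embedded j M M0 A" "\<eta> \<in> topspace M0" "(U, \<phi>) \<in> A" "(V, \<psi>) \<in> A" "\<eta> \<in> U \<inter> V"
  shows "frakC1 j (trans_dom j M0 U \<phi> V) (transition j U \<phi> \<psi>)"
proof -
  have "\<forall>\<eta>\<in>topspace M0. \<forall>(U, \<phi>)\<in>A. \<forall>(V, \<psi>)\<in>A. \<eta> \<in> U \<inter> V \<longrightarrow>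
      frakC1 j (trans_dom j M0 U \<phi> V) (transition j U \<phi> \<psi>)"
    using assms(1) unfolding C1_embedded_def by blast
  then show ?thesis
    using assms(2-5) by fast
qed

lemma C1_embedded_chart_in_range:
  assumes "C1_embedded j M M0 A" "\<eta> \<in> topspace M0" "(U, \<phi>) \<in> A" "\<eta> \<in> U"
  shows "\<phi> \<eta> \<in> range j"
proof -
  have "\<forall>\<eta>\<in>topspace M0. \<forall>(U, \<phi>)\<in>A. \<eta> \<in> U \<longrightarrow>
      (\<exists>\<phi>0. (\<forall>p\<in>U \<inter> topspace M0. j (\<phi>0 p) = \<phi> p) \<and> is_chart M0 \<phi>0 (U \<inter> topspace M0))"
    using assms(1) by (simp add: C1_embedded_def)
  then obtain \<phi>0 where "\<forall>p\<in>U \<inter> topspace M0. j (\<phi>0 p) = \<phi> p"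
    using assms(2-4) by fast
  then show ?thesis
    using assms(2,4) by (metis IntI rangeI)
qed

text \<open>\<open>T\<close> is the transition map between the extensions of the two charts to the outer manifold.\<close>

lemma outward_spread_transition:
  assumes spread: "outward_spread j M A Mt At"
    and "(U, \<phi>) \<in> A" "(V, \<psi>) \<in> A" "\<eta> \<in> U \<inter> V"
  obtains T :: "'b::banach \<Rightarrow> 'c::banach" and L :: "'c \<Rightarrow>\<^sub>L 'c"
  where "(T has_derivative (\<lambda>y. L (j y))) (at (\<phi> \<eta>))" "\<And>p. p \<in> U \<inter> V \<Longrightarrow> T (\<phi> p) = j (\<psi> p)"
proof -
  have emb: "C1_embedded j Mt M At"
    using spread by (simp add: outward_spread_def)
  have lift: "\<forall>(U, \<phi>)\<in>A. \<exists>(Ut, \<phi>t)\<in>At. U = Ut \<inter> topspace M \<and> (\<forall>p\<in>U. j (\<phi> p) = \<phi>t p)"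
    using spread by (simp add: outward_spread_def)
  obtain Ut \<phi>t where Ut: "(Ut, \<phi>t) \<in> At" "U = Ut \<inter> topspace M" "\<And>p. p \<in> U \<Longrightarrow> j (\<phi> p) = \<phi>t p"
    using bspec[OF lift assms(2)] by auto
  obtain Vt \<psi>t where Vt: "(Vt, \<psi>t) \<in> At" "V = Vt \<inter> topspace M" "\<And>p. p \<in> V \<Longrightarrow> j (\<psi> p) = \<psi>t p"
    using bspec[OF lift assms(3)] by auto
  define D where "D = trans_dom j M Ut \<phi>t Vt"
  define T where "T = transition j Ut \<phi>t \<psi>t"
  have inj: "inj_on \<phi>t Ut"
    using is_chart_inj_on C1_embedded_is_chart[OF emb Ut(1)] .
  have "\<eta> \<in> topspace M" "\<eta> \<in> Ut \<inter> Vt"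
    using assms(4) Ut(2) Vt(2) by auto
  then have D: "frakC1 j D T"
    unfolding D_def T_def by (rule C1_embedded_transition_frakC1[OF emb _ Ut(1) Vt(1)])
  have T: "T (\<phi> p) = j (\<psi> p)" if p: "p \<in> U \<inter> V" for p
  proof -
    have "p \<in> Ut" "j (\<phi> p) = \<phi>t p"
      using p Ut(2,3) by auto
    then show ?thesis
      unfolding T_def using transition_apply[OF inj] p Vt(3) by simp
  qed
  have "\<phi> \<eta> \<in> D"
    using assms(4) Ut(2,3) Vt(2) unfolding D_def trans_dom_def by force
  with D show ?thesis
    using that T frakC1_has_derivative C1_embedded_densely_embedded[OF emb] by blast
qed

lemma derivative_intertwining:
  fixes L0 :: "'b::banach \<Rightarrow>\<^sub>L 'b" and L :: "'c::real_normed_vector \<Rightarrow>\<^sub>L 'c"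
  assumes T0: "(T0 has_derivative (\<lambda>h. L0 (j0 h))) (at x0)"
    and T: "(T has_derivative (\<lambda>y. L (j1 y))) (at (j0 x0))"
    and D: "open D" "x0 \<in> D" "\<And>x. x \<in> D \<Longrightarrow> T (j0 x) = j1 (T0 x)"
    and j0: "densely_embedded j0" and j1: "bounded_linear j1"
  shows "j1 (L0 y) = L (j1 y)"
proof -
  have bl0: "bounded_linear j0"
    using j0 by (simp add: densely_embedded_def)
  have "((\<lambda>x. j1 (T0 x)) has_derivative (\<lambda>h. j1 (L0 (j0 h)))) (at x0)"
    using bounded_linear.has_derivative[OF j1 T0] .
  moreover have "((\<lambda>x. T (j0 x)) has_derivative (\<lambda>h. L (j1 (j0 h)))) (at x0)"
    using diff_chain_at[OF bounded_linear_imp_has_derivative[OF bl0] T] by (simp add: o_def)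
  then have "((\<lambda>x. j1 (T0 x)) has_derivative (\<lambda>h. L (j1 (j0 h)))) (at x0)"
    using D by (rule has_derivative_transform_within_open) simp_all
  ultimately have "(\<lambda>h. j1 (L0 (j0 h))) = (\<lambda>h. L (j1 (j0 h)))"
    by (rule has_derivative_unique)
  then have "(\<lambda>y. j1 (L0 y)) = (\<lambda>y. L (j1 y))"
    using j0 j1 by (intro bounded_linear_eq_on_dense_range[where j = j0])
      (auto simp: fun_eq_iff intro!: bounded_linear_compose[OF j1] bounded_linear_compose[OF _ j1]
        blinfun.bounded_linear_right)
  then show ?thesis
    by metis
qed

lemma vector_derivative_chain_transform:
  fixes g :: "real \<Rightarrow> 'a::real_normed_vector" and h :: "real \<Rightarrow> 'b::real_normed_vector"
  assumes g: "g differentiable (at t0 within I)" and h: "h differentiable (at t0 within I)"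
    and T: "(T has_derivative L) (at (g t0))"
    and I: "open I" "t0 \<in> I" "\<And>t. t \<in> I \<Longrightarrow> T (g t) = j (h t)"
    and j: "bounded_linear j"
  shows "j (vector_derivative h (at t0 within I)) = L (vector_derivative g (at t0 within I))"
proof -
  have at: "at t0 within I = at t0"
    using at_within_open[OF I(2,1)] .
  define dg dh where "dg = vector_derivative g (at t0)" and "dh = vector_derivative h (at t0)"
  have dg: "(g has_derivative (\<lambda>t. t *\<^sub>R dg)) (at t0)"
    using g unfolding at dg_def vector_derivative_works has_vector_derivative_def .
  have dh: "(h has_vector_derivative dh) (at t0)"
    using h unfolding at dh_def vector_derivative_works .
  have "((\<lambda>t. T (g t)) has_derivative (\<lambda>t. L (t *\<^sub>R dg))) (at t0)"
    using diff_chain_at[OF dg T] by (simp add: o_def)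
  then have "((\<lambda>t. T (g t)) has_vector_derivative L dg) (at t0)"
    using T unfolding has_vector_derivative_def
    by (simp add: has_derivative_bounded_linear linear_scale bounded_linear.linear)
  then have "((\<lambda>t. j (h t)) has_vector_derivative L dg) (at t0)"
    using I by (rule has_vector_derivative_transform_within_open) simp_all
  moreover have "((\<lambda>t. j (h t)) has_vector_derivative j dh) (at t0)"
    using bounded_linear.has_vector_derivative[OF j dh] .
  ultimately show ?thesis
    unfolding at dg_def dh_def by (rule vector_derivative_unique_at[symmetric])
qed

lemma frakC1_deriv_transition_intertwines:
  fixes L :: "'c::banach \<Rightarrow>\<^sub>L 'c"
  assumes emb: "C1_embedded j0 M M0 A" and eta: "\<eta> \<in> topspace M0"
    and chU: "(U, \<phi>) \<in> A" "\<eta> \<in> U" and chV: "(V, \<psi>) \<in> A" "\<eta> \<in> V"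
    and T: "(T has_derivative (\<lambda>y. L (j1 y))) (at (\<phi> \<eta>))"
    and T_eq: "\<And>p. p \<in> U \<inter> V \<Longrightarrow> T (\<phi> p) = j1 (\<psi> p)"
    and j1: "bounded_linear j1"
  shows "j1 (frakC1_deriv j0 (trans_dom j0 M0 U \<phi> V) (transition j0 U \<phi> \<psi>) (inv j0 (\<phi> \<eta>)) y) = L (j1 y)"
proof -
  define D0 where "D0 = trans_dom j0 M0 U \<phi> V"
  define T0 where "T0 = transition j0 U \<phi> \<psi>"
  define x0 where "x0 = inv j0 (\<phi> \<eta>)"
  have j0: "densely_embedded j0"
    using C1_embedded_densely_embedded[OF emb] .
  have inj: "inj_on \<phi> U"
    using is_chart_inj_on C1_embedded_is_chart[OF emb chU(1)] .
  have D0: "frakC1 j0 D0 T0"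
    unfolding D0_def T0_def using C1_embedded_transition_frakC1[OF emb eta chU(1) chV(1)] chU(2) chV(2) by blast
  have x0: "j0 x0 = \<phi> \<eta>"
    unfolding x0_def using C1_embedded_chart_in_range[OF emb eta chU] by (rule f_inv_into_f)
  have x0_D0: "x0 \<in> D0"
    using x0 eta chU(2) chV(2) unfolding D0_def trans_dom_def by force
  have T_D0: "T (j0 x) = j1 (T0 x)" if x: "x \<in> D0" for x
  proof -
    obtain p where p: "p \<in> U \<inter> V \<inter> topspace M0" "j0 x = \<phi> p"
      using x unfolding D0_def by (rule trans_domE)
    then have "T0 x = \<psi> p"
      unfolding T0_def by (intro transition_apply[OF inj]) auto
    then show ?thesis
      using T_eq p by simp
  qed
  have "(T has_derivative (\<lambda>y. L (j1 y))) (at (j0 x0))"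
    using T x0 by simp
  moreover have "open D0"
    using D0 by (simp add: frakC1_def)
  ultimately show ?thesis
    unfolding D0_def[symmetric] T0_def[symmetric] x0_def[symmetric]
    by (rule derivative_intertwining[OF frakC1_has_derivative[OF D0 x0_D0 j0] _ _ x0_D0 T_D0 j0 j1])
qed

theorem lemma2p8:
  fixes j0 :: "'a::banach \<Rightarrow> 'b::banach" and j1 :: "'b \<Rightarrow> 'c::banach"
    and M M0 Mt :: "'m topology"
    and A :: "('m set \<times> ('m \<Rightarrow> 'b)) set" and At :: "('m set \<times> ('m \<Rightarrow> 'c)) set"
    and \<eta> :: 'm and U V :: "'m set" and \<phi> \<psi> :: "'m \<Rightarrow> 'b"
    and f :: "real \<Rightarrow> 'm" and \<epsilon> :: real
  assumes emb: "C1_embedded j0 M M0 A"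
    and spread: "outward_spread j1 M A Mt At"
    and eta: "\<eta> \<in> topspace M0"
    and chU: "(U, \<phi>) \<in> A" "\<eta> \<in> U"
    and eps: "\<epsilon> > 0"
    and fU: "f ` {-\<epsilon><..<\<epsilon>} \<subseteq> U" and f0: "f 0 = \<eta>"
    and dphi: "(\<phi> \<circ> f) differentiable (at 0 within {-\<epsilon><..<\<epsilon>})"
    and chV: "(V, \<psi>) \<in> A" "\<eta> \<in> V"
    and fV: "f ` {-\<epsilon><..<\<epsilon>} \<subseteq> V"
    and dpsi: "(\<psi> \<circ> f) differentiable (at 0 within {-\<epsilon><..<\<epsilon>})"
  shows "vector_derivative (\<psi> \<circ> f) (at 0 within {-\<epsilon><..<\<epsilon>}) =
         blinfun_apply
           (frakC1_deriv j0 (trans_dom j0 M0 U \<phi> V) (transition j0 U \<phi> \<psi>) (inv j0 (\<phi> \<eta>)))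
           (vector_derivative (\<phi> \<circ> f) (at 0 within {-\<epsilon><..<\<epsilon>}))"
proof -
  let ?I = "{-\<epsilon><..<\<epsilon>}"
  have j1: "bounded_linear j1" "inj j1"
    using spread C1_embedded_densely_embedded by (auto simp: outward_spread_def densely_embedded_def)
  obtain T and L :: "'c \<Rightarrow>\<^sub>L 'c" where T: "(T has_derivative (\<lambda>y. L (j1 y))) (at (\<phi> \<eta>))"
    and T_eq: "\<And>p. p \<in> U \<inter> V \<Longrightarrow> T (\<phi> p) = j1 (\<psi> p)"
    using outward_spread_transition[OF spread chU(1) chV(1)] chU(2) chV(2) by blast
  have "open ?I" "0 \<in> ?I" "\<And>t. t \<in> ?I \<Longrightarrow> T ((\<phi> \<circ> f) t) = j1 ((\<psi> \<circ> f) t)"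
    using eps fU fV T_eq by (auto simp: image_subset_iff)
  then have "j1 (vector_derivative (\<psi> \<circ> f) (at 0 within ?I)) =
      L (j1 (vector_derivative (\<phi> \<circ> f) (at 0 within ?I)))"
    using T f0 by (intro vector_derivative_chain_transform[OF dphi dpsi _ _ _ _ j1(1)]) auto
  also have "\<dots> = j1 (frakC1_deriv j0 (trans_dom j0 M0 U \<phi> V) (transition j0 U \<phi> \<psi>) (inv j0 (\<phi> \<eta>))
      (vector_derivative (\<phi> \<circ> f) (at 0 within ?I)))"
    using frakC1_deriv_transition_intertwines[OF emb eta chU chV T T_eq j1(1)] by simp
  finally show ?thesis
    by (rule injD[OF j1(2)])
qed

end
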